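(* Let $(\varphi_n)_{n\ge0}$ be vectors in $\mathbb{R}^d$, $r_0=1$, $r_n=1+\sum_{i=1}^n\|\varphi_i\|^2$, $A_n=\varphi_n\varphi_n^\top/r_n$, and define $\Phi(i,i)=I$, $\Phi(n+1,i)=(I-A_n)\Phi(n,i)$ for $n\ge i$. Assume $r_n\to\infty$, $r_n=O(r_{n-1})$, and that for some $\alpha<1$ $$\kappa\Big(\sum_{i=1}^n\varphi_i\varphi_i^\top\Big)=O\big((\log r_n)^\alpha\big),$$ i.e. there exist $M>0$ and $n_0$ such that for all $n\ge n_0$ the matrix $\sum_{i=1}^n\varphi_i\varphi_i^\top$ is nonsingular with condition number at most $M(\log r_n)^\alpha$. Then $\Phi(n,0)\to0$ as $n\to\infty$.
   Context: For a nonsingular matrix $A$, $\kappa(A)=\|A\|\,\|A^{-1}\|$ with $\|\cdot\|$ the spectral norm; $\log$ is the natural logarithm; $r_n=O(r_{n-1})$ means $r_n\le Cr_{n-1}$ for some constant $C$ and all $n\ge1$. *)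

theory Defs
  imports "HOL-Analysis.Analysis"
begin

definition spec_norm :: "real^'d^'d \<Rightarrow> real" where
  "spec_norm A = onorm (\<lambda>x. A *v x)"

definition cond_num :: "real^'d^'d \<Rightarrow> real" where
  "cond_num A = spec_norm A * spec_norm (matrix_inv A)"

definition outer :: "real^'d \<Rightarrow> real^'d^'d" where
  "outer v = (\<chi> i j. v $ i * v $ j)"

definition rseq :: "(nat \<Rightarrow> real^'d) \<Rightarrow> nat \<Rightarrow> real" where
  "rseq phi n = 1 + (\<Sum>i=1..n. (norm (phi i))^2)"

definition Amat :: "(nat \<Rightarrow> real^'d) \<Rightarrow> nat \<Rightarrow> real^'d^'d" where
  "Amat phi n = (1 / rseq phi n) *\<^sub>R outer (phi n)"

primrec Phi0 :: "(nat \<Rightarrow> real^'d) \<Rightarrow> nat \<Rightarrow> real^'d^'d" where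
  "Phi0 phi 0 = mat 1"
| "Phi0 phi (Suc n) = (mat 1 - Amat phi n) ** Phi0 phi n"

end

theory Submission
  imports Defs "HOL-Real_Asymp.Real_Asymp"
begin

(* Let x_n = Phi(n,0) x and V_n = |x_n|^2. For n >= 1 every step dissipates energy,
   V_(n+1) + (phi_n . x_n)^2 / r_n <= V_n, and the condition number bound turns into the
   excitation inequality (r_n - 1) |y|^2 <= d K_n sum_(i<=n) (phi_i . y)^2 with
   K_n = M (ln r_n)^alpha. Let p + 1 be the first time at which r exceeds r_n / (4 d K_n). The
   early regressors phi_1..phi_p carry at most a quarter of the excitation, so x_(p+1) is
   excited by phi_(p+1)..phi_n; freezing x at time p + 1 costs a drift controlled by
   sum |phi_j|^2 / r_j <= ln (r_n / r_p) <= l = ln (4 d C K_n), and the dissipated energy gives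
   V_(n+1) <= (1 - 1 / (8 d K_n (1 + l^2))) V_(p+1). Since K_n (ln K_n)^3 = o(ln r_n) for
   alpha < 1, this contraction beats the growth of ln r, so the potential V_n ln r_n never exceeds
   its values on an initial segment; hence V_n = O(1 / ln r_n) -> 0 for every x. *)

section \<open>The normalising sequence\<close>

lemma rseq_0 [simp]: "rseq phi 0 = 1"
  by (simp add: rseq_def)

lemma rseq_Suc: "rseq phi (Suc n) = rseq phi n + (norm (phi (Suc n)))\<^sup>2"
  by (simp add: rseq_def)

lemma rseq_ge_1: "1 \<le> rseq phi n"
  by (simp add: rseq_def sum_nonneg)

lemma rseq_pos: "0 < rseq phi n"
  using rseq_ge_1[of phi n] by linarith

lemma rseq_mono: "m \<le> n \<Longrightarrow> rseq phi m \<le> rseq phi n"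
  by (induction n rule: dec_induct) (auto simp: rseq_Suc intro: order_trans)

lemma norm_sq_le_rseq: "1 \<le> k \<Longrightarrow> (norm (phi k))\<^sup>2 \<le> rseq phi k"
  using rseq_Suc[of phi "k - 1"] rseq_ge_1[of phi "k - 1"] by (cases k) auto

lemma sum_norm_sq_div_rseq_le_ln:
  assumes "p \<le> n"
  shows "(\<Sum>j=Suc p..n. (norm (phi j))\<^sup>2 / rseq phi j) \<le> ln (rseq phi n) - ln (rseq phi p)"
  using assms
proof (induction n rule: dec_induct)
  case (step n)
  have r_pos: "0 < rseq phi n" "0 < rseq phi (Suc n)"
    by (simp_all add: rseq_pos)
  have "(norm (phi (Suc n)))\<^sup>2 / rseq phi (Suc n) = 1 - rseq phi n / rseq phi (Suc n)"
    using r_pos by (simp add: rseq_Suc field_simps)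
  also have "\<dots> \<le> - ln (rseq phi n / rseq phi (Suc n))"
    using ln_le_minus_one[of "rseq phi n / rseq phi (Suc n)"] r_pos by simp
  also have "\<dots> = ln (rseq phi (Suc n)) - ln (rseq phi n)"
    using r_pos by (simp add: ln_div)
  finally show ?case
    using step.IH step.hyps by simp
qed simp

lemma growth_const_ge_1:
  assumes "\<And>k. 1 \<le> k \<Longrightarrow> rseq phi k \<le> C * rseq phi (k - 1)"
  shows "1 \<le> C"
  using assms[of 1] rseq_ge_1[of phi 1] by simp

lemma ln_rseq_Suc_le:
  assumes growth: "\<And>k. 1 \<le> k \<Longrightarrow> rseq phi k \<le> C * rseq phi (k - 1)"
  shows "ln (rseq phi (Suc n)) \<le> ln C + ln (rseq phi n)"
proof -
  have "ln (rseq phi (Suc n)) \<le> ln (C * rseq phi n)"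
    using growth[of "Suc n"] rseq_pos[of phi "Suc n"] by simp
  also have "\<dots> = ln C + ln (rseq phi n)"
    using growth_const_ge_1[OF growth] rseq_pos[of phi n] by (simp add: ln_mult)
  finally show ?thesis .
qed

lemma sum_inner_sq_le_rseq:
  "(\<Sum>i=1..p. (phi i \<bullet> y)\<^sup>2) \<le> (rseq phi p - 1) * (norm y)\<^sup>2"
proof -
  have "(\<Sum>i=1..p. (phi i \<bullet> y)\<^sup>2) \<le> (\<Sum>i=1..p. (norm (phi i))\<^sup>2 * (norm y)\<^sup>2)"
    using Cauchy_Schwarz_ineq by (intro sum_mono) (simp add: power2_norm_eq_inner)
  then show ?thesis
    by (simp add: rseq_def sum_distrib_right)
qed

section \<open>Condition number and excitation\<close>

lemma outer_mult_vec: "outer v *v y = (v \<bullet> y) *\<^sub>R v"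
  by (simp add: vec_eq_iff outer_def matrix_vector_mult_def inner_vec_def sum_distrib_left
      algebra_simps)

lemma sum_matrix_vector_mult:
  fixes A :: "'i \<Rightarrow> real^'n^'m"
  shows "(\<Sum>i\<in>I. A i) *v y = (\<Sum>i\<in>I. A i *v y)"
  by (induction I rule: infinite_finite_induct) (auto simp: matrix_vector_mult_add_rdistrib)

lemma inner_sum_outer_mult_vec:
  "y \<bullet> ((\<Sum>i\<in>I. outer (v i)) *v z) = (\<Sum>i\<in>I. (v i \<bullet> y) * (v i \<bullet> z))"
  by (simp add: sum_matrix_vector_mult outer_mult_vec inner_sum_right inner_commute mult.commute)

lemma matrix_inv_right: "invertible (S::real^'n^'n) \<Longrightarrow> S ** matrix_inv S = mat 1"
  unfolding invertible_def matrix_inv_def by (rule someI2_ex) auto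

lemma spec_norm_bound: "norm (A *v y) \<le> spec_norm A * norm y"
  unfolding spec_norm_def by (rule onorm) simp

lemma spec_norm_nonneg: "0 \<le> spec_norm A"
  unfolding spec_norm_def by (rule onorm_pos_le) simp

lemma sum_norm_sq_le_spec_norm_sum_outer:
  fixes v :: "'i \<Rightarrow> real^'d"
  assumes "finite I"
  shows "(\<Sum>i\<in>I. (norm (v i))\<^sup>2) \<le> real CARD('d) * spec_norm (\<Sum>i\<in>I. outer (v i))"
proof -
  let ?S = "\<Sum>i\<in>I. outer (v i)"
  have "(\<Sum>i\<in>I. (norm (v i))\<^sup>2) = (\<Sum>i\<in>I. \<Sum>j\<in>UNIV. (v i \<bullet> axis j 1) * (v i \<bullet> axis j 1))"
    by (simp only: cart_eq_inner_axis[symmetric]) (simp add: power2_norm_eq_inner inner_vec_def)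
  also have "\<dots> = (\<Sum>j\<in>UNIV. axis j 1 \<bullet> (?S *v axis j 1))"
    by (subst sum.swap) (simp add: inner_sum_outer_mult_vec)
  also have "\<dots> \<le> (\<Sum>j\<in>(UNIV::'d set). spec_norm ?S)"
  proof (rule sum_mono)
    fix j :: 'd
    have "axis j 1 \<bullet> (?S *v axis j 1) \<le> norm (axis j (1::real)) * norm (?S *v axis j 1)"
      by (rule norm_cauchy_schwarz)
    also have "\<dots> \<le> spec_norm ?S"
      using spec_norm_bound[of ?S "axis j 1"] by simp
    finally show "axis j 1 \<bullet> (?S *v axis j 1) \<le> spec_norm ?S" .
  qed
  finally show ?thesis by simp
qed

lemma norm_sq_le_spec_norm_inv_sum_outer:
  fixes v :: "'i \<Rightarrow> real^'d"
  assumes inv: "invertible (\<Sum>i\<in>I. outer (v i))"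
  shows "(norm x)\<^sup>2 \<le> spec_norm (matrix_inv (\<Sum>i\<in>I. outer (v i))) * (\<Sum>i\<in>I. (v i \<bullet> x)\<^sup>2)"
proof -
  define S where "S = (\<Sum>i\<in>I. outer (v i))"
  define B where "B = matrix_inv S"
  define q where "q y z = (\<Sum>i\<in>I. (v i \<bullet> y) * (v i \<bullet> z))" for y z
  have q_eq: "q y z = y \<bullet> (S *v z)" for y z
    by (simp add: q_def S_def inner_sum_outer_mult_vec)
  have SB: "S *v (B *v y) = y" for y
    using inv by (simp add: S_def B_def matrix_vector_mul_assoc matrix_inv_right)
  have qxx: "q x x = (\<Sum>i\<in>I. (v i \<bullet> x)\<^sup>2)"
    by (simp add: q_def power2_eq_square)
  have qxx_nonneg: "0 \<le> q x x"
    by (simp add: qxx sum_nonneg)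
  have qBB: "q (B *v x) (B *v x) \<le> spec_norm B * (norm x)\<^sup>2"
  proof -
    have "q (B *v x) (B *v x) = (B *v x) \<bullet> x"
      by (simp add: q_eq SB)
    also have "\<dots> \<le> norm (B *v x) * norm x"
      by (rule norm_cauchy_schwarz)
    also have "\<dots> \<le> spec_norm B * norm x * norm x"
      by (simp add: mult_right_mono spec_norm_bound)
    finally show ?thesis by (simp add: power2_eq_square mult.assoc)
  qed
  \<comment> \<open>Cauchy--Schwarz for the semi-inner product q, applied to x \<bullet> x = q x (B x)\<close>
  have "((norm x)\<^sup>2)\<^sup>2 = (q x (B *v x))\<^sup>2"
    by (simp add: q_eq SB power2_norm_eq_inner)
  also have "\<dots> \<le> q x x * q (B *v x) (B *v x)"
    unfolding q_def using Cauchy_Schwarz_ineq_sum[of "\<lambda>i. v i \<bullet> x" "\<lambda>i. v i \<bullet> (B *v x)" I]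
    by (simp add: power2_eq_square)
  also have "\<dots> \<le> q x x * (spec_norm B * (norm x)\<^sup>2)"
    by (rule mult_left_mono[OF qBB qxx_nonneg])
  finally have sq: "(norm x)\<^sup>2 * (norm x)\<^sup>2 \<le> (spec_norm B * q x x) * (norm x)\<^sup>2"
    by (simp add: power2_eq_square algebra_simps)
  have "(norm x)\<^sup>2 \<le> spec_norm B * q x x"
  proof (cases "x = 0")
    case False
    then show ?thesis by (intro mult_right_le_imp_le[OF sq]) simp
  qed (use qxx_nonneg spec_norm_nonneg[of B] in simp)
  then show ?thesis
    by (simp add: qxx B_def S_def)
qed

lemma sum_outer_cond_num_bound:
  fixes v :: "'i \<Rightarrow> real^'d"
  assumes "finite I" and "invertible (\<Sum>i\<in>I. outer (v i))"
  shows "(\<Sum>i\<in>I. (norm (v i))\<^sup>2) * (norm x)\<^sup>2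
    \<le> real CARD('d) * cond_num (\<Sum>i\<in>I. outer (v i)) * (\<Sum>i\<in>I. (v i \<bullet> x)\<^sup>2)"
proof -
  let ?S = "\<Sum>i\<in>I. outer (v i)"
  have "(\<Sum>i\<in>I. (norm (v i))\<^sup>2) * (norm x)\<^sup>2
      \<le> (real CARD('d) * spec_norm ?S) * (spec_norm (matrix_inv ?S) * (\<Sum>i\<in>I. (v i \<bullet> x)\<^sup>2))"
    using assms
    by (intro mult_mono sum_norm_sq_le_spec_norm_sum_outer norm_sq_le_spec_norm_inv_sum_outer)
      (auto intro: sum_nonneg mult_nonneg_nonneg spec_norm_nonneg)
  then show ?thesis
    by (simp add: cond_num_def mult_ac)
qed

definition excitation_bound :: "(nat \<Rightarrow> real^'d) \<Rightarrow> real \<Rightarrow> nat \<Rightarrow> bool" where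
  "excitation_bound phi K n \<longleftrightarrow>
    (\<forall>y. (rseq phi n - 1) * (norm y)\<^sup>2 \<le> real CARD('d) * K * (\<Sum>i=1..n. (phi i \<bullet> y)\<^sup>2))"

lemma excitation_bound_if_cond_num_le:
  fixes phi :: "nat \<Rightarrow> real^'d"
  assumes "invertible (\<Sum>i=1..n. outer (phi i))" and "cond_num (\<Sum>i=1..n. outer (phi i)) \<le> K"
  shows "excitation_bound phi K n"
  unfolding excitation_bound_def
proof
  fix y :: "real^'d"
  have "(rseq phi n - 1) * (norm y)\<^sup>2
      \<le> real CARD('d) * cond_num (\<Sum>i=1..n. outer (phi i)) * (\<Sum>i=1..n. (phi i \<bullet> y)\<^sup>2)"
    using sum_outer_cond_num_bound[of "{1..n}" phi y] assms(1) by (simp add: rseq_def)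
  also have "\<dots> \<le> real CARD('d) * K * (\<Sum>i=1..n. (phi i \<bullet> y)\<^sup>2)"
    using assms(2) by (intro mult_right_mono mult_left_mono sum_nonneg) auto
  finally show "(rseq phi n - 1) * (norm y)\<^sup>2 \<le> real CARD('d) * K * (\<Sum>i=1..n. (phi i \<bullet> y)\<^sup>2)" .
qed

section \<open>Energy dissipation along a trajectory\<close>

lemma norm_sub_inner_scaleR_sq_le:
  fixes y v :: "'a::real_inner"
  assumes r: "0 < r" "(norm v)\<^sup>2 \<le> r"
  shows "(norm (y - ((v \<bullet> y) / r) *\<^sub>R v))\<^sup>2 + (v \<bullet> y)\<^sup>2 / r \<le> (norm y)\<^sup>2"
proof -
  let ?t = "(v \<bullet> y) / r"
  have "(norm (y - ?t *\<^sub>R v))\<^sup>2 = (norm y)\<^sup>2 - 2 * ?t * (v \<bullet> y) + ?t\<^sup>2 * (norm v)\<^sup>2"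
    by (simp add: power2_norm_eq_inner inner_diff_left inner_diff_right inner_commute)
      (simp add: algebra_simps power2_eq_square)
  also have "?t\<^sup>2 * (norm v)\<^sup>2 \<le> ?t\<^sup>2 * r"
    using r by (intro mult_left_mono) auto
  finally show ?thesis
    using r by (simp add: power2_eq_square)
qed

lemma inner_sq_le_shift:
  fixes v a b :: "'a::real_inner"
  shows "(v \<bullet> a)\<^sup>2 \<le> 2 * (v \<bullet> b)\<^sup>2 + 2 * ((norm v)\<^sup>2 * (norm (a - b))\<^sup>2)"
proof -
  have "(v \<bullet> a)\<^sup>2 = (v \<bullet> b + v \<bullet> (a - b))\<^sup>2"
    by (simp add: inner_diff_right)
  also have "\<dots> \<le> 2 * (v \<bullet> b)\<^sup>2 + 2 * (v \<bullet> (a - b))\<^sup>2"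
    using zero_le_power2[of "v \<bullet> b - v \<bullet> (a - b)"] by (simp add: power2_eq_square algebra_simps)
  moreover have "(v \<bullet> (a - b))\<^sup>2 \<le> (norm v)\<^sup>2 * (norm (a - b))\<^sup>2"
    using Cauchy_Schwarz_ineq[of v "a - b"] by (simp add: power2_norm_eq_inner)
  ultimately show ?thesis
    by linarith
qed

definition traj :: "(nat \<Rightarrow> real^'d) \<Rightarrow> real^'d \<Rightarrow> nat \<Rightarrow> real^'d" where
  "traj phi x n = Phi0 phi n *v x"

lemma traj_Suc:
  "traj phi x (Suc k) = traj phi x k - ((phi k \<bullet> traj phi x k) / rseq phi k) *\<^sub>R phi k"
  by (simp add: traj_def Amat_def matrix_vector_mul_assoc[symmetric]
      matrix_vector_mult_diff_rdistrib scaleR_matrix_vector_assoc[symmetric] outer_mult_vec)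

lemma norm_traj_Suc_sq_le:
  assumes "1 \<le> k"
  shows "(norm (traj phi x (Suc k)))\<^sup>2 + (phi k \<bullet> traj phi x k)\<^sup>2 / rseq phi k
    \<le> (norm (traj phi x k))\<^sup>2"
  unfolding traj_Suc
  by (rule norm_sub_inner_scaleR_sq_le[OF rseq_pos norm_sq_le_rseq[OF assms]])

lemma sum_dissipation_le:
  assumes "1 \<le> m" "m \<le> Suc n"
  shows "(\<Sum>k=m..n. (phi k \<bullet> traj phi x k)\<^sup>2 / rseq phi k)
    \<le> (norm (traj phi x m))\<^sup>2 - (norm (traj phi x (Suc n)))\<^sup>2"
proof -
  let ?V = "\<lambda>k. (norm (traj phi x k))\<^sup>2"
  have "(\<Sum>k=m..n. (phi k \<bullet> traj phi x k)\<^sup>2 / rseq phi k) \<le> (\<Sum>k=m..n. ?V k - ?V (Suc k))"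
  proof (rule sum_mono)
    fix k assume "k \<in> {m..n}"
    then have "1 \<le> k" using assms(1) by simp
    from norm_traj_Suc_sq_le[OF this, of phi x]
    show "(phi k \<bullet> traj phi x k)\<^sup>2 / rseq phi k \<le> ?V k - ?V (Suc k)" by simp
  qed
  also have "\<dots> = ?V m - ?V (Suc n)"
    using sum_Suc_diff[OF assms(2), of "\<lambda>k. - ?V k"] by simp
  finally show ?thesis .
qed

lemma traj_diff_eq_sum:
  assumes "m \<le> i"
  shows "traj phi x m - traj phi x i
    = (\<Sum>j=m..<i. ((phi j \<bullet> traj phi x j) / rseq phi j) *\<^sub>R phi j)"
  using sum_Suc_diff'[OF assms, of "\<lambda>j. - traj phi x j"] by (simp add: traj_Suc)

lemma norm_traj_diff_sq_le:
  assumes "m \<le> i"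
  shows "(norm (traj phi x m - traj phi x i))\<^sup>2
    \<le> (\<Sum>j=m..<i. (phi j \<bullet> traj phi x j)\<^sup>2 / rseq phi j) * (\<Sum>j=m..<i. (norm (phi j))\<^sup>2 / rseq phi j)"
proof -
  define a where "a j = \<bar>phi j \<bullet> traj phi x j\<bar> / sqrt (rseq phi j)" for j
  define b where "b j = norm (phi j) / sqrt (rseq phi j)" for j
  have r_pos: "0 < rseq phi j" for j
    by (rule rseq_pos)
  have ab: "a j * b j = norm (((phi j \<bullet> traj phi x j) / rseq phi j) *\<^sub>R phi j)" for j
    using r_pos[of j] by (simp add: a_def b_def abs_div flip: real_sqrt_mult)
  have "norm (traj phi x m - traj phi x i) \<le> (\<Sum>j=m..<i. a j * b j)"
    unfolding ab traj_diff_eq_sum[OF assms] by (rule norm_sum)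
  then have "(norm (traj phi x m - traj phi x i))\<^sup>2 \<le> (\<Sum>j=m..<i. a j * b j)\<^sup>2"
    by (simp add: power_mono)
  also have "\<dots> \<le> (\<Sum>j=m..<i. (a j)\<^sup>2) * (\<Sum>j=m..<i. (b j)\<^sup>2)"
    by (rule Cauchy_Schwarz_ineq_sum)
  finally show ?thesis
    using r_pos by (simp add: a_def b_def power_divide less_imp_le)
qed

lemma norm_traj_drift_sq_le:
  assumes "1 \<le> m" "m \<le> i" "i \<le> Suc n"
  shows "(norm (traj phi x m - traj phi x i))\<^sup>2
    \<le> ((norm (traj phi x m))\<^sup>2 - (norm (traj phi x (Suc n)))\<^sup>2)
      * (\<Sum>j=m..n. (norm (phi j))\<^sup>2 / rseq phi j)"
proof -
  define e where "e j = (phi j \<bullet> traj phi x j)\<^sup>2 / rseq phi j" for j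
  define w where "w j = (norm (phi j))\<^sup>2 / rseq phi j" for j
  have e_nonneg: "0 \<le> e j" and w_nonneg: "0 \<le> w j" for j
    using rseq_pos[of phi j] by (simp_all add: e_def w_def)
  have sub: "{m..<i} \<subseteq> {m..n}"
    using assms by auto
  have "(norm (traj phi x m - traj phi x i))\<^sup>2 \<le> sum e {m..<i} * sum w {m..<i}"
    using norm_traj_diff_sq_le[OF assms(2), of phi x] by (simp add: e_def w_def)
  also have "\<dots> \<le> sum e {m..n} * sum w {m..n}"
    using sub by (intro mult_mono sum_mono2) (auto simp: e_nonneg w_nonneg sum_nonneg)
  also have "\<dots> \<le> ((norm (traj phi x m))\<^sup>2 - (norm (traj phi x (Suc n)))\<^sup>2) * sum w {m..n}"
    using sum_dissipation_le[of m n phi x] assms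
    by (intro mult_right_mono) (auto simp: e_def w_nonneg sum_nonneg)
  finally show ?thesis
    by (simp add: w_def)
qed

lemma sum_inner_frozen_traj_sq_le:
  assumes m: "1 \<le> m" "m \<le> n"
  shows "(\<Sum>i=m..n. (phi i \<bullet> traj phi x m)\<^sup>2 / rseq phi i)
    \<le> 2 * (1 + (\<Sum>j=m..n. (norm (phi j))\<^sup>2 / rseq phi j)\<^sup>2)
        * ((norm (traj phi x m))\<^sup>2 - (norm (traj phi x (Suc n)))\<^sup>2)"
proof -
  define e where "e j = (phi j \<bullet> traj phi x j)\<^sup>2 / rseq phi j" for j
  define w where "w j = (norm (phi j))\<^sup>2 / rseq phi j" for j
  define D where "D = (norm (traj phi x m))\<^sup>2 - (norm (traj phi x (Suc n)))\<^sup>2"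
  define W where "W = sum w {m..n}"
  have r_pos: "0 < rseq phi j" for j
    by (rule rseq_pos)
  have eD: "sum e {m..n} \<le> D"
    unfolding e_def D_def using m by (intro sum_dissipation_le) auto
  have dist: "(norm (traj phi x m - traj phi x i))\<^sup>2 \<le> D * W" if "i \<in> {m..n}" for i
    using norm_traj_drift_sq_le[of m i n phi x] m that by (simp add: D_def W_def w_def)
  have term_le: "(phi i \<bullet> traj phi x m)\<^sup>2 / rseq phi i \<le> 2 * e i + 2 * w i * (D * W)"
    if i: "i \<in> {m..n}" for i
  proof -
    have "(norm (phi i))\<^sup>2 * (norm (traj phi x m - traj phi x i))\<^sup>2 \<le> (norm (phi i))\<^sup>2 * (D * W)"
      using dist[OF i] by (intro mult_left_mono) auto
    then have "(phi i \<bullet> traj phi x m)\<^sup>2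
        \<le> 2 * (phi i \<bullet> traj phi x i)\<^sup>2 + 2 * ((norm (phi i))\<^sup>2 * (D * W))"
      using inner_sq_le_shift[of "phi i" "traj phi x m" "traj phi x i"] by linarith
    then have "(phi i \<bullet> traj phi x m)\<^sup>2 / rseq phi i
        \<le> (2 * (phi i \<bullet> traj phi x i)\<^sup>2 + 2 * ((norm (phi i))\<^sup>2 * (D * W))) / rseq phi i"
      using r_pos[of i] by (simp add: divide_right_mono)
    then show ?thesis
      by (simp add: e_def w_def add_divide_distrib)
  qed
  have "(\<Sum>i=m..n. (phi i \<bullet> traj phi x m)\<^sup>2 / rseq phi i)
      \<le> (\<Sum>i=m..n. 2 * e i + 2 * w i * (D * W))"
    by (rule sum_mono) (rule term_le)
  also have "\<dots> = 2 * sum e {m..n} + 2 * W * (D * W)"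
    by (simp add: W_def sum.distrib flip: sum_distrib_left sum_distrib_right)
  also have "\<dots> \<le> 2 * (1 + W\<^sup>2) * D"
    using eD by (simp add: algebra_simps power2_eq_square)
  finally show ?thesis
    by (simp add: D_def W_def w_def)
qed

section \<open>Contraction over a block\<close>

lemma norm_sq_le_late_excitation:
  fixes phi :: "nat \<Rightarrow> real^'d" and K :: real
  assumes pn: "p < n" and K: "1 \<le> K" and excitation: "excitation_bound phi K n"
    and threshold: "4 * real CARD('d) * K * rseq phi p \<le> rseq phi n"
  shows "(norm y)\<^sup>2 \<le> 4 * real CARD('d) * K * (\<Sum>i=Suc p..n. (phi i \<bullet> y)\<^sup>2 / rseq phi i)"
proof -
  define d where "d = real CARD('d)"
  have dK: "1 \<le> d * K"
    using K mult_mono[of 1 d 1 K] by (simp add: d_def)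
  have "rseq phi p \<le> d * K * rseq phi p"
    using mult_right_mono[OF dK, of "rseq phi p"] rseq_ge_1[of phi p] by simp
  moreover have "4 * (d * K * rseq phi p) \<le> rseq phi n"
    using threshold by (simp add: d_def mult_ac)
  ultimately have "2 \<le> rseq phi n"
    using rseq_ge_1[of phi p] by linarith
  then have "rseq phi n / 2 * (norm y)\<^sup>2 \<le> (rseq phi n - 1) * (norm y)\<^sup>2"
    by (intro mult_right_mono) auto
  moreover have "d * K * (\<Sum>i=1..p. (phi i \<bullet> y)\<^sup>2) \<le> rseq phi n * (norm y)\<^sup>2 / 4"
  proof -
    have "(rseq phi p - 1) * (norm y)\<^sup>2 \<le> rseq phi p * (norm y)\<^sup>2"
      by (intro mult_right_mono) auto
    then have "(\<Sum>i=1..p. (phi i \<bullet> y)\<^sup>2) \<le> rseq phi p * (norm y)\<^sup>2"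
      using sum_inner_sq_le_rseq[where phi = phi and p = p and y = y] by linarith
    then have "d * K * (\<Sum>i=1..p. (phi i \<bullet> y)\<^sup>2) \<le> d * K * (rseq phi p * (norm y)\<^sup>2)"
      using dK by (intro mult_left_mono) auto
    also have "\<dots> = (4 * d * K * rseq phi p) * (norm y)\<^sup>2 / 4"
      by simp
    also have "\<dots> \<le> rseq phi n * (norm y)\<^sup>2 / 4"
      using threshold unfolding d_def by (intro divide_right_mono mult_right_mono) auto
    finally show ?thesis .
  qed
  moreover have "{1..n} = {1..p} \<union> {Suc p..n}"
    using pn by auto
  ultimately have "rseq phi n * (norm y)\<^sup>2 / 4 \<le> d * K * (\<Sum>i=Suc p..n. (phi i \<bullet> y)\<^sup>2)"
    using excitation[unfolded excitation_bound_def, rule_format, of y]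
    by (simp add: d_def sum.union_disjoint algebra_simps)
  then have "(norm y)\<^sup>2 \<le> 4 * d * K * ((\<Sum>i=Suc p..n. (phi i \<bullet> y)\<^sup>2) / rseq phi n)"
    using rseq_pos[of phi n] by (simp add: field_simps)
  also have "\<dots> \<le> 4 * d * K * (\<Sum>i=Suc p..n. (phi i \<bullet> y)\<^sup>2 / rseq phi i)"
    unfolding sum_divide_distrib using K
    by (intro mult_left_mono sum_mono divide_left_mono)
      (auto simp: d_def intro: rseq_mono mult_pos_pos rseq_pos)
  finally show ?thesis
    by (simp add: d_def)
qed

lemma norm_traj_contraction:
  fixes phi :: "nat \<Rightarrow> real^'d" and K l :: real
  assumes pn: "p < n" and K: "1 \<le> K" and excitation: "excitation_bound phi K n"
    and threshold: "4 * real CARD('d) * K * rseq phi p \<le> rseq phi n"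
    and l: "ln (rseq phi n) - ln (rseq phi p) \<le> l"
  shows "(norm (traj phi x (Suc n)))\<^sup>2
    \<le> (1 - 1 / (8 * real CARD('d) * K * (1 + l\<^sup>2))) * (norm (traj phi x (Suc p)))\<^sup>2"
proof -
  define d where "d = real CARD('d)"
  define y where "y = traj phi x (Suc p)"
  define D where "D = (norm y)\<^sup>2 - (norm (traj phi x (Suc n)))\<^sup>2"
  define W where "W = (\<Sum>j=Suc p..n. (norm (phi j))\<^sup>2 / rseq phi j)"
  have dK: "0 \<le> 4 * d * K"
    using K by (simp add: d_def)
  have W_nonneg: "0 \<le> W"
    unfolding W_def by (intro sum_nonneg divide_nonneg_pos zero_le_power2 rseq_pos)
  have W_l: "W\<^sup>2 \<le> l\<^sup>2"
    using sum_norm_sq_div_rseq_le_ln[of p n phi] pn l W_nonneg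
    by (intro power_mono) (auto simp: W_def)
  have "0 \<le> (\<Sum>k=Suc p..n. (phi k \<bullet> traj phi x k)\<^sup>2 / rseq phi k)"
    by (intro sum_nonneg divide_nonneg_pos zero_le_power2 rseq_pos)
  then have D_nonneg: "0 \<le> D"
    using sum_dissipation_le[of "Suc p" n phi x] pn unfolding D_def y_def by linarith
  have "(norm y)\<^sup>2 \<le> 4 * d * K * (\<Sum>i=Suc p..n. (phi i \<bullet> y)\<^sup>2 / rseq phi i)"
    unfolding d_def by (rule norm_sq_le_late_excitation[OF pn K excitation threshold])
  also have "\<dots> \<le> 4 * d * K * (2 * (1 + W\<^sup>2) * D)"
    unfolding y_def W_def D_def using pn
    by (intro mult_left_mono[OF _ dK] sum_inner_frozen_traj_sq_le) auto
  also have "\<dots> \<le> 4 * d * K * (2 * (1 + l\<^sup>2) * D)"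
    using W_l D_nonneg by (intro mult_left_mono[OF _ dK] mult_right_mono) auto
  finally have "(norm y)\<^sup>2 \<le> (8 * d * K * (1 + l\<^sup>2)) * D"
    by (simp add: algebra_simps)
  moreover have "0 < 8 * d * K * (1 + l\<^sup>2)"
    using K by (simp add: d_def add_pos_nonneg)
  ultimately show ?thesis
    by (simp add: d_def y_def D_def field_simps)
qed

section \<open>Convergence\<close>

(* The admissible size of the excitation constant K at the level r: it holds eventually as
   soon as K (ln K)^3 = o(ln r). *)
definition slow_gain :: "real \<Rightarrow> real \<Rightarrow> real \<Rightarrow> real \<Rightarrow> bool" where
  "slow_gain d C K r \<longleftrightarrow> 1 \<le> K \<and> 4 * d * K \<le> r \<and>
     (ln C + ln (4 * d * K)) * (8 * d * K * (1 + (ln (4 * d * C * K))\<^sup>2)) \<le> ln C + ln r"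

lemma eventually_slow_gain_powr:
  fixes a M C d :: real
  assumes "0 < a" "a < 1" "0 < M" "0 < C" "0 < d"
  shows "\<forall>\<^sub>F u in at_top. slow_gain d C (M * u powr a) (exp u)"
  unfolding slow_gain_def ln_exp using assms
  by (intro eventually_conj) real_asymp+

lemma exists_crossing_step:
  fixes f :: "nat \<Rightarrow> 'a::linorder"
  assumes "f 0 \<le> T" and "T < f n"
  shows "\<exists>p<n. f p \<le> T \<and> T < f (Suc p)"
  using assms(2)
proof (induction n)
  case (Suc n)
  then show ?case
    by (metis less_SucI lessI not_less)
qed (use assms(1) in simp)

lemma exists_block_start:
  fixes G :: real
  assumes growth: "\<And>k. 1 \<le> k \<Longrightarrow> rseq phi k \<le> C * rseq phi (k - 1)"
    and G: "1 < G" "G \<le> rseq phi n"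
  obtains p where "p < n" and "G * rseq phi p \<le> rseq phi n"
    and "ln (rseq phi n) - ln (rseq phi p) \<le> ln (G * C)"
    and "ln (rseq phi n) - ln G < ln (rseq phi (Suc p))"
proof -
  define T where "T = rseq phi n / G"
  have C: "1 \<le> C"
    by (rule growth_const_ge_1[OF growth])
  have T: "rseq phi 0 \<le> T" "T < rseq phi n"
    using G rseq_pos[of phi n] by (simp_all add: T_def field_simps)
  then obtain p where p: "p < n" "rseq phi p \<le> T" "T < rseq phi (Suc p)"
    using exists_crossing_step[of "rseq phi" T n] by blast
  have "rseq phi n < G * rseq phi (Suc p)"
    using p(3) G by (simp add: T_def field_simps)
  also have "\<dots> \<le> (G * C) * rseq phi p"
    using growth[of "Suc p"] G by (simp add: mult_left_mono mult.assoc)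
  finally have "ln (rseq phi n) < ln ((G * C) * rseq phi p)"
    using rseq_pos[of phi n] by (intro ln_less_cancel_iff[THEN iffD2]) linarith+
  then have gap: "ln (rseq phi n) - ln (rseq phi p) \<le> ln (G * C)"
    using G C rseq_pos[of phi p] by (simp add: ln_mult)
  have "ln (rseq phi n) - ln G = ln T"
    using G rseq_pos[of phi n] by (simp add: T_def ln_div)
  also have "\<dots> < ln (rseq phi (Suc p))"
    using p(3) T(1) by simp
  finally have start: "ln (rseq phi n) - ln G < ln (rseq phi (Suc p))" .
  have "G * rseq phi p \<le> rseq phi n"
    using p(2) G by (simp add: T_def field_simps)
  from that[OF p(1) this gap start] show ?thesis .
qed

lemma potential_step:
  fixes phi :: "nat \<Rightarrow> real^'d" and C K :: real
  assumes growth: "\<And>k. 1 \<le> k \<Longrightarrow> rseq phi k \<le> C * rseq phi (k - 1)"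
    and gain: "slow_gain (real CARD('d)) C K (rseq phi n)" and excitation: "excitation_bound phi K n"
  shows "\<exists>m\<in>{1..n}. (norm (traj phi x (Suc n)))\<^sup>2 * ln (rseq phi (Suc n))
    \<le> (norm (traj phi x m))\<^sup>2 * ln (rseq phi m)"
proof -
  define d where "d = real CARD('d)"
  from gain have K: "1 \<le> K" and small: "4 * d * K \<le> rseq phi n"
    and slow: "(ln C + ln (4 * d * K)) * (8 * d * K * (1 + (ln (4 * d * C * K))\<^sup>2))
      \<le> ln C + ln (rseq phi n)"
    by (simp_all add: slow_gain_def d_def)
  define l where "l = ln (4 * d * C * K)"
  define X where "X = 8 * d * K * (1 + l\<^sup>2)"
  define \<rho> where "\<rho> = 1 / X"
  have dK: "1 \<le> d * K"
    using K mult_mono[of 1 d 1 K] by (simp add: d_def)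
  then have G: "1 < 4 * d * K"
    by (simp add: mult.assoc)
  obtain p where pn: "p < n" and threshold: "4 * d * K * rseq phi p \<le> rseq phi n"
    and gap: "ln (rseq phi n) - ln (rseq phi p) \<le> ln (4 * d * K * C)"
    and start: "ln (rseq phi n) - ln (4 * d * K) < ln (rseq phi (Suc p))"
    using exists_block_start[OF growth G small] by blast
  have contraction: "(norm (traj phi x (Suc n)))\<^sup>2 \<le> (1 - \<rho>) * (norm (traj phi x (Suc p)))\<^sup>2"
    using norm_traj_contraction[OF pn K excitation, of l] threshold gap
    by (simp add: \<rho>_def X_def d_def l_def mult_ac)
  have "1 \<le> X"
    using mult_mono[of 1 "8 * d * K" 1 "1 + l\<^sup>2"] dK unfolding X_def by (simp add: mult.commute)
  then have \<rho>: "0 \<le> \<rho>" "\<rho> \<le> 1"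
    by (simp_all add: \<rho>_def)
  \<comment> \<open>ln r may grow by ln C per step, but it lay ln (4 d K) lower at the start of the block\<close>
  have "(1 - \<rho>) * ln (rseq phi (Suc n)) \<le> (1 - \<rho>) * (ln C + ln (rseq phi n))"
    using ln_rseq_Suc_le[OF growth] \<rho> by (intro mult_left_mono) auto
  also have "\<dots> \<le> ln (rseq phi n) - ln (4 * d * K)"
    using slow \<open>1 \<le> X\<close> by (simp add: \<rho>_def X_def l_def field_simps)
  also have "\<dots> < ln (rseq phi (Suc p))"
    by (rule start)
  finally have ln_drop: "(1 - \<rho>) * ln (rseq phi (Suc n)) \<le> ln (rseq phi (Suc p))"
    by simp
  have "(norm (traj phi x (Suc n)))\<^sup>2 * ln (rseq phi (Suc n))
      \<le> ((1 - \<rho>) * (norm (traj phi x (Suc p)))\<^sup>2) * ln (rseq phi (Suc n))"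
    using contraction rseq_ge_1[of phi "Suc n"] by (intro mult_right_mono) auto
  also have "\<dots> = (norm (traj phi x (Suc p)))\<^sup>2 * ((1 - \<rho>) * ln (rseq phi (Suc n)))"
    by simp
  also have "\<dots> \<le> (norm (traj phi x (Suc p)))\<^sup>2 * ln (rseq phi (Suc p))"
    using ln_drop by (intro mult_left_mono) auto
  finally show ?thesis
    using pn by (intro bexI[of _ "Suc p"]) auto
qed

lemma le_Max_if_dominated_by_earlier:
  fixes Q :: "nat \<Rightarrow> 'a::linorder"
  assumes dominated: "\<And>n. N \<le> n \<Longrightarrow> \<exists>m\<in>{1..n}. Q (Suc n) \<le> Q m" and "1 \<le> n"
  shows "Q n \<le> Max (Q ` {1..N})"
  using assms(2)
proof (induction n rule: less_induct)
  case (less n)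
  show ?case
  proof (cases "n \<le> N")
    case True
    then show ?thesis
      using less.prems by (intro Max_ge) auto
  next
    case False
    then obtain k where n: "n = Suc k" and "N \<le> k"
      by (cases n) auto
    then obtain m where "m \<in> {1..k}" and "Q n \<le> Q m"
      using dominated by blast
    then show ?thesis
      using less.IH[of m] n by fastforce
  qed
qed

lemma traj_tendsto_0:
  fixes phi :: "nat \<Rightarrow> real^'d" and K :: "nat \<Rightarrow> real" and C :: real
  assumes r_inf: "filterlim (rseq phi) at_top sequentially"
    and growth: "\<And>k. 1 \<le> k \<Longrightarrow> rseq phi k \<le> C * rseq phi (k - 1)"
    and K: "\<forall>\<^sub>F n in sequentially.
      slow_gain (real CARD('d)) C (K n) (rseq phi n) \<and> excitation_bound phi (K n) n"
  shows "traj phi x \<longlonglongrightarrow> 0"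
proof -
  define Q where "Q n = (norm (traj phi x n))\<^sup>2 * ln (rseq phi n)" for n
  obtain N where "\<And>n. N \<le> n \<Longrightarrow>
      slow_gain (real CARD('d)) C (K n) (rseq phi n) \<and> excitation_bound phi (K n) n"
    using K unfolding eventually_sequentially by blast
  then have "\<exists>m\<in>{1..n}. Q (Suc n) \<le> Q m" if "N \<le> n" for n
    unfolding Q_def using that by (blast intro: potential_step[OF growth])
  then have Q_bound: "Q n \<le> Max (Q ` {1..N})" if "1 \<le> n" for n
    using that by (rule le_Max_if_dominated_by_earlier)
  have ln_r: "filterlim (\<lambda>n. ln (rseq phi n)) at_top sequentially"
    using filterlim_compose[OF ln_at_top r_inf] .
  have upper: "\<forall>\<^sub>F n in sequentially. (norm (traj phi x n))\<^sup>2 \<le> Max (Q ` {1..N}) / ln (rseq phi n)"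
    using eventually_ge_at_top[of 1] ln_r[THEN filterlim_at_top_dense[THEN iffD1], rule_format, of 0]
  proof eventually_elim
    case (elim n)
    then show ?case
      using Q_bound[of n] by (simp add: Q_def pos_le_divide_eq)
  qed
  have lim: "(\<lambda>n. Max (Q ` {1..N}) / ln (rseq phi n)) \<longlonglongrightarrow> 0"
    by (rule tendsto_divide_0[OF tendsto_const filterlim_at_top_imp_at_infinity[OF ln_r]])
  have "(\<lambda>n. (norm (traj phi x n))\<^sup>2) \<longlonglongrightarrow> 0"
    by (rule tendsto_sandwich[OF always_eventually upper tendsto_const lim]) simp
  then have "(\<lambda>n. sqrt ((norm (traj phi x n))\<^sup>2)) \<longlonglongrightarrow> sqrt 0"
    by (rule tendsto_real_sqrt)
  then show ?thesis
    by (simp add: tendsto_norm_zero_iff)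
qed

lemma tendsto_0_if_mult_vec_tendsto_0:
  fixes A :: "'a \<Rightarrow> real^'n^'m"
  assumes "\<And>v. ((\<lambda>t. A t *v v) \<longlongrightarrow> 0) F"
  shows "(A \<longlongrightarrow> 0) F"
proof (intro vec_tendstoI)
  fix i j
  have "((\<lambda>t. (A t *v axis j 1) $ i) \<longlongrightarrow> 0 $ i) F"
    by (intro tendsto_vec_nth assms)
  then show "((\<lambda>t. A t $ i $ j) \<longlongrightarrow> 0 $ i $ j) F"
    by (simp add: matrix_vector_mult_basis column_def)
qed

lemma eventually_slow_gain_excitation:
  fixes phi :: "nat \<Rightarrow> real^'d" and C M \<alpha> :: real
  assumes r_inf: "filterlim (rseq phi) at_top sequentially" and "0 < C" "\<alpha> < 1" "0 < M"
    and cond: "\<forall>\<^sub>F n in sequentially. invertible (\<Sum>i=1..n. outer (phi i))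
      \<and> cond_num (\<Sum>i=1..n. outer (phi i)) \<le> M * ln (rseq phi n) powr \<alpha>"
  shows "\<forall>\<^sub>F n in sequentially.
    slow_gain (real CARD('d)) C (M * ln (rseq phi n) powr max \<alpha> (1/2)) (rseq phi n)
    \<and> excitation_bound phi (M * ln (rseq phi n) powr max \<alpha> (1/2)) n"
proof -
  \<comment> \<open>the asymptotics need a positive exponent; once ln r \<ge> 1, raising it only weakens the bound\<close>
  define K where "K n = M * ln (rseq phi n) powr max \<alpha> (1/2)" for n
  have ln_r: "filterlim (\<lambda>n. ln (rseq phi n)) at_top sequentially"
    using filterlim_compose[OF ln_at_top r_inf] .
  have "\<forall>\<^sub>F u in at_top. slow_gain (real CARD('d)) C (M * u powr max \<alpha> (1/2)) (exp u)"
    using assms(2-4) by (intro eventually_slow_gain_powr) auto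
  from eventually_compose_filterlim[OF this ln_r]
  have "\<forall>\<^sub>F n in sequentially. slow_gain (real CARD('d)) C (K n) (rseq phi n)"
    by (simp add: K_def rseq_pos)
  then show ?thesis
    using cond filterlim_at_top[THEN iffD1, OF ln_r, rule_format, of 1]
  proof eventually_elim
    case (elim n)
    have "M * ln (rseq phi n) powr \<alpha> \<le> K n"
      unfolding K_def using elim(3) \<open>0 < M\<close> by (intro mult_left_mono powr_mono) auto
    then show ?case
      using elim(1,2) by (auto simp: K_def intro: excitation_bound_if_cond_num_le)
  qed
qed

theorem mainTheorem5:
  fixes phi :: "nat \<Rightarrow> real^'d"
  assumes r_inf: "filterlim (rseq phi) at_top sequentially"
    and r_O: "\<exists>C. \<forall>n\<ge>1. rseq phi n \<le> C * rseq phi (n - 1)"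
    and cond: "\<exists>\<alpha>::real. \<alpha> < 1 \<and> (\<exists>M>0. \<exists>n0. \<forall>n\<ge>n0.
         invertible (\<Sum>i=1..n. outer (phi i)) \<and>
         cond_num (\<Sum>i=1..n. outer (phi i)) \<le> M * (ln (rseq phi n)) powr \<alpha>)"
  shows "(\<lambda>n. Phi0 phi n) \<longlonglongrightarrow> 0"
proof -
  obtain C where growth: "\<And>n. 1 \<le> n \<Longrightarrow> rseq phi n \<le> C * rseq phi (n - 1)"
    using r_O by blast
  have "0 < C"
    using growth_const_ge_1[OF growth] by simp
  obtain \<alpha> M where "\<alpha> < 1" "0 < M" and cond_ev: "\<forall>\<^sub>F n in sequentially.
      invertible (\<Sum>i=1..n. outer (phi i)) \<and>
      cond_num (\<Sum>i=1..n. outer (phi i)) \<le> M * ln (rseq phi n) powr \<alpha>"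
    using cond unfolding eventually_sequentially by blast
  have "traj phi x \<longlonglongrightarrow> 0" for x
    using r_inf growth eventually_slow_gain_excitation[OF r_inf \<open>0 < C\<close> \<open>\<alpha> < 1\<close> \<open>0 < M\<close> cond_ev]
    by (rule traj_tendsto_0)
  then show ?thesis
    unfolding traj_def by (rule tendsto_0_if_mult_vec_tendsto_0)
qed

end
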